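(* Let $|\psi\rangle,|\phi\rangle,|e\rangle,|f\rangle$ be unit vectors in $\mathbb{C}^2$ and let $\mathcal{R}$ be the set of random unitary channels on $\mathcal{L}(\mathbb{C}^2)$. Then $$\max_{\Psi\in\mathcal{R}}\left\{\frac12\langle e|\Psi(|\psi\rangle\langle\psi|)|e\rangle+\frac12\langle f|\Psi(|\phi\rangle\langle\phi|)|f\rangle\right\}=\frac12\left(1+|\langle\psi|\phi\rangle||\langle e|f\rangle|+\sqrt{(1-|\langle\psi|\phi\rangle|^2)(1-|\langle e|f\rangle|^2)}\right).$$ The right-hand side equals $1$ if and only if $|\langle\psi|\phi\rangle|=|\langle e|f\rangle|$; consequently, $(|\psi\rangle,|\phi\rangle)$ is jointly convertible into $(|e\rangle,|f\rangle)$ within $\mathcal{R}$ if and only if $|\langle\psi|\phi\rangle|=|\langle e|f\rangle|$.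
   Context: $\mathcal{R}$ consists of the maps $A\mapsto\sum_xp_xU_xAU_x^\dagger$ with $\{p_x\}$ a finite probability distribution and $U_x$ unitary operators on $\mathbb{C}^2$. For a set $\mathcal{X}$ of quantum channels, $(|\psi\rangle,|\phi\rangle)$ is jointly convertible into $(|e\rangle,|f\rangle)$ within $\mathcal{X}$ if there exists $\Psi\in\mathcal{X}$ with $\Psi(|\psi\rangle\langle\psi|)=|e\rangle\langle e|$ and $\Psi(|\phi\rangle\langle\phi|)=|f\rangle\langle f|$. *)

theory Defs
  imports "HOL-Analysis.Analysis"
begin

type_synonym qvec = "complex ^ 2"
type_synonym qop = "complex ^ 2 ^ 2"

definition braket :: "qvec \<Rightarrow> qvec \<Rightarrow> complex" where
  "braket x y = (\<Sum>i\<in>UNIV. cnj (x $ i) * y $ i)"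

definition ketbra :: "qvec \<Rightarrow> qop" where
  "ketbra x = (\<chi> i j. x $ i * cnj (x $ j))"

definition adjm :: "qop \<Rightarrow> qop" where
  "adjm A = (\<chi> i j. cnj (A $ j $ i))"

definition unitary_op :: "qop \<Rightarrow> bool" where
  "unitary_op U \<longleftrightarrow> U ** adjm U = mat 1 \<and> adjm U ** U = mat 1"

definition random_unitary_channels :: "(qop \<Rightarrow> qop) set" where
  "random_unitary_channels =
     {\<Psi>. \<exists>(n::nat) (p::nat \<Rightarrow> real) (U::nat \<Rightarrow> qop).
           (\<forall>x<n. 0 \<le> p x) \<and> (\<Sum>x<n. p x) = 1 \<and> (\<forall>x<n. unitary_op (U x)) \<and>
           \<Psi> = (\<lambda>A. \<Sum>x<n. p x *\<^sub>R (U x ** A ** adjm (U x)))}"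

definition jointly_convertible ::
  "(qop \<Rightarrow> qop) set \<Rightarrow> qvec \<Rightarrow> qvec \<Rightarrow> qvec \<Rightarrow> qvec \<Rightarrow> bool" where
  "jointly_convertible X \<psi> \<phi> e f \<longleftrightarrow>
     (\<exists>\<Psi>\<in>X. \<Psi> (ketbra \<psi>) = ketbra e \<and> \<Psi> (ketbra \<phi>) = ketbra f)"

definition success :: "(qop \<Rightarrow> qop) \<Rightarrow> qvec \<Rightarrow> qvec \<Rightarrow> qvec \<Rightarrow> qvec \<Rightarrow> real" where
  "success \<Psi> \<psi> \<phi> e f =
     Re (braket e (\<Psi> (ketbra \<psi>) *v e)) / 2 + Re (braket f (\<Psi> (ketbra \<phi>) *v f)) / 2"

end

theory Submission
  imports Defs
begin

text \<open>
  Write P, Q, S, T for the Bloch vectors of U\<psi>, U\<phi>, e, f, so that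
  |<u|w>|^2 = (1 + r_u \<bullet> r_w) / 2. For a single unitary the figure of merit is
  1/2 + (S \<bullet> P + T \<bullet> Q) / 4, and
  S \<bullet> P + T \<bullet> Q = ((S + T) \<bullet> (P + Q) + (S - T) \<bullet> (P - Q)) / 2.
  Since |P + Q| = 2a, |P - Q| = 2 sqrt (1 - a^2) and likewise for S, T with b,
  Cauchy-Schwarz gives the bound, which passes to convex mixtures of unitaries. A
  unitary placing U\<psi>, U\<phi> on the real great circle through e and f, at equal
  angle from each, attains it. The bound equals 1 iff a = b; conversely, if a = b a
  single unitary maps \<psi> to e and \<phi> to a phase multiple of f.
\<close>

lemma braket_2: "braket x y = cnj (x$1) * y$1 + cnj (x$2) * y$2"
  by (simp add: braket_def sum_2)

lemma norm_power2_vec2: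
  fixes u :: "complex^2"
  shows "(norm u)\<^sup>2 = (cmod (u$1))\<^sup>2 + (cmod (u$2))\<^sup>2"
  by (simp add: norm_vec_def L2_set_def sum_2)

lemma braket_self: "braket u u = of_real ((norm u)\<^sup>2)"
  unfolding norm_power2_vec2 of_real_add complex_norm_square by (simp add: braket_2 algebra_simps)

lemma norm_eq_1_iff_braket: "norm u = 1 \<longleftrightarrow> braket u u = 1"
proof -
  have "norm u = 1 \<longleftrightarrow> (norm u)\<^sup>2 = 1"
    by (simp add: power2_eq_1_iff) (use norm_ge_zero[of u] in linarith)
  then show ?thesis
    unfolding braket_self by (metis of_real_1 of_real_eq_iff)
qed

lemma braket_scale_left: "braket (c *s x) y = cnj c * braket x y"
  by (simp add: braket_2 algebra_simps)

lemma braket_scale_right: "braket x (c *s y) = c * braket x y"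
  by (simp add: braket_2 algebra_simps)

lemma unimodular_mult_cnj:
  assumes "cmod z = 1" shows "z * cnj z = 1" "cnj z * z = 1"
  using assms complex_norm_square[of z] by (simp_all add: mult.commute)

lemma polar_form: "z = of_real (cmod z) * cis (Arg z)"
  by (metis rcis_cmod_Arg rcis_def)

definition perp :: "qvec \<Rightarrow> qvec" where
  "perp u = vector [- cnj (u$2), cnj (u$1)]"

lemma perp_nth [simp]: "perp u $ 1 = - cnj (u$2)" "perp u $ 2 = cnj (u$1)"
  by (simp_all add: perp_def)

lemma lagrange_identity:
  "(cmod (braket x y))\<^sup>2 + (cmod (braket (perp x) y))\<^sup>2 = (norm x)\<^sup>2 * (norm y)\<^sup>2"
  unfolding norm_power2_vec2 by (simp add: braket_2 cmod_power2) algebra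

lemma cmod_braket_le: "cmod (braket x y) \<le> norm x * norm y"
proof -
  have "(cmod (braket x y))\<^sup>2 \<le> (norm x * norm y)\<^sup>2"
    using lagrange_identity[of x y] by (simp add: power_mult_distrib) (smt (verit) zero_le_power2)
  then show ?thesis by (simp add: power2_le_iff_abs_le)
qed

lemma cmod_braket_le_1: "norm x = 1 \<Longrightarrow> norm y = 1 \<Longrightarrow> cmod (braket x y) \<le> 1"
  using cmod_braket_le[of x y] by simp

lemma braket_expansion: assumes "norm x = 1"
  shows "y = braket x y *s x + braket (perp x) y *s perp x"
proof -
  have "x$1 * cnj (x$1) + x$2 * cnj (x$2) = 1"
    using assms by (simp add: norm_eq_1_iff_braket braket_2 mult.commute)
  then show ?thesis
    by (simp add: vec_eq_iff forall_2 braket_2) algebra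
qed

lemma braket_unitary: assumes "unitary_op U"
  shows "braket (U *v x) (U *v y) = braket x y"
proof -
  have "adjm U ** U = mat 1" using assms unfolding unitary_op_def by simp
  then have "cnj (U$1$1) * U$1$1 + cnj (U$2$1) * U$2$1 = 1"
     "cnj (U$1$1) * U$1$2 + cnj (U$2$1) * U$2$2 = 0"
     "cnj (U$1$2) * U$1$1 + cnj (U$2$2) * U$2$1 = 0"
     "cnj (U$1$2) * U$1$2 + cnj (U$2$2) * U$2$2 = 1"
    by (simp_all add: vec_eq_iff forall_2 matrix_matrix_mult_def adjm_def sum_2 mat_def)
  then show ?thesis
    by (simp add: braket_2 matrix_vector_mult_def sum_2) algebra
qed

lemma norm_unitary: assumes "unitary_op U" shows "norm (U *v x) = norm x"
proof -
  have "(norm (U *v x))\<^sup>2 = (norm x)\<^sup>2"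
    using braket_unitary[OF assms, of x x] unfolding braket_self of_real_eq_iff .
  then show ?thesis by (simp add: power2_eq_iff_nonneg)
qed

lemma unitary_maps_pair:
  assumes "norm \<psi> = 1" "norm \<phi> = 1" "norm x = 1" "norm y = 1"
    and "braket x y = braket \<psi> \<phi>"
  shows "\<exists>U. unitary_op U \<and> U *v \<psi> = x \<and> U *v \<phi> = y"
proof -
  define k where "k = braket (perp \<psi>) \<phi>"
  define k' where "k' = braket (perp x) y"
  have "cmod k = cmod k'"
    using lagrange_identity[of \<psi> \<phi>] lagrange_identity[of x y] assms unfolding k_def k'_def
    by (metis add_left_cancel norm_ge_zero power2_eq_iff_nonneg)
  define l where "l = (if k = 0 then 1 else k' / k)"
  have l: "cmod l = 1" "l * k = k'"
    using \<open>cmod k = cmod k'\<close> unfolding l_def by (auto simp: norm_divide)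
  \<comment> \<open>U = |x><\<psi>| + l |perp x><perp \<psi>|, the phase l aligning the components orthogonal to x and \<psi>\<close>
  define U :: qop where "U = (\<chi> i j. x$i * cnj (\<psi>$j) + l * perp x $ i * cnj (perp \<psi> $ j))"
  have U_apply: "U *v w = braket \<psi> w *s x + (l * braket (perp \<psi>) w) *s perp x" for w
    by (simp add: U_def vec_eq_iff forall_2 matrix_vector_mult_def sum_2 braket_2 algebra_simps)
  have "U *v \<psi> = x"
    unfolding U_apply using assms(1) by (simp add: norm_eq_1_iff_braket braket_2 algebra_simps)
  moreover have "U *v \<phi> = y"
    unfolding U_apply using braket_expansion[OF assms(3), of y] assms(5) l unfolding k_def k'_def by simp
  moreover have "unitary_op U"
  proof -
    have "x$1 * cnj (x$1) + x$2 * cnj (x$2) = 1" "\<psi>$1 * cnj (\<psi>$1) + \<psi>$2 * cnj (\<psi>$2) = 1"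
      using assms(1,3) by (simp_all add: norm_eq_1_iff_braket braket_2 mult.commute)
    moreover note unimodular_mult_cnj[OF l(1)]
    ultimately have "U ** adjm U = mat 1" "adjm U ** U = mat 1"
      by (simp_all add: U_def vec_eq_iff forall_2 matrix_matrix_mult_def sum_2 adjm_def mat_def; algebra)+
    then show ?thesis unfolding unitary_op_def by simp
  qed
  ultimately show ?thesis by blast
qed

lemma unitary_conj_ketbra: "U ** ketbra w ** adjm U = ketbra (U *v w)"
  by (simp add: vec_eq_iff forall_2 matrix_matrix_mult_def matrix_vector_mult_def ketbra_def adjm_def
      sum_2 algebra_simps)

lemma braket_ketbra: "braket e (ketbra w *v e) = of_real ((cmod (braket e w))\<^sup>2)"
  unfolding complex_norm_square
  by (simp add: braket_2 matrix_vector_mult_def ketbra_def sum_2 algebra_simps)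

lemma ketbra_scale_unimodular: assumes "cmod d = 1" shows "ketbra (d *s f) = ketbra f"
proof -
  show ?thesis
    using unimodular_mult_cnj[OF assms] unfolding ketbra_def by (simp add: vec_eq_iff algebra_simps)
qed

lemma braket_sum_scaleR:
  assumes "finite S"
  shows "braket e ((\<Sum>x\<in>S. c x *\<^sub>R M x) *v e) = (\<Sum>x\<in>S. of_real (c x) * braket e (M x *v e))"
  using assms
proof (induction S rule: finite_induct)
  case empty
  then show ?case by (simp add: braket_def)
next
  case (insert x F)
  have "braket e ((c x *\<^sub>R M x + A) *v e) = of_real (c x) * braket e (M x *v e) + braket e (A *v e)"
    for A :: qop
    by (simp add: braket_2 matrix_vector_mult_def sum_2 algebra_simps)
      (simp add: scaleR_conv_of_real algebra_simps)
  then show ?case using insert by simp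
qed

lemma success_unitary_conj:
  "success (\<lambda>A. U ** A ** adjm U) \<psi> \<phi> e f
     = ((cmod (braket e (U *v \<psi>)))\<^sup>2 + (cmod (braket f (U *v \<phi>)))\<^sup>2) / 2"
  unfolding success_def unitary_conj_ketbra braket_ketbra by simp

lemma success_mixture:
  assumes "finite S"
  shows "success (\<lambda>A. \<Sum>x\<in>S. p x *\<^sub>R (U x ** A ** adjm (U x))) \<psi> \<phi> e f
     = (\<Sum>x\<in>S. p x * success (\<lambda>A. U x ** A ** adjm (U x)) \<psi> \<phi> e f)"
  unfolding success_def using assms
  by (simp add: braket_sum_scaleR sum_divide_distrib sum.distrib algebra_simps)

lemma unitary_conj_random_unitary:
  assumes "unitary_op U"
  shows "(\<lambda>A. U ** A ** adjm U) \<in> random_unitary_channels"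
proof -
  have "(\<lambda>A. U ** A ** adjm U) = (\<lambda>A. \<Sum>x<1::nat. 1 *\<^sub>R (U ** A ** adjm U))"
    by simp
  then show ?thesis unfolding random_unitary_channels_def using assms
    by (intro CollectI exI[of _ "1::nat"] exI[of _ "\<lambda>_. 1::real"] exI[of _ "\<lambda>_::nat. U"]) auto
qed

definition bloch :: "qvec \<Rightarrow> real^3" where
  "bloch u = vector [2 * Re (cnj (u$1) * u$2), 2 * Im (cnj (u$1) * u$2), (cmod (u$1))\<^sup>2 - (cmod (u$2))\<^sup>2]"

lemma cmod_braket_power2_bloch:
  assumes "norm u = 1" "norm w = 1"
  shows "(cmod (braket u w))\<^sup>2 = (1 + bloch u \<bullet> bloch w) / 2"
proof -
  have "(Re (u$1))\<^sup>2 + (Im (u$1))\<^sup>2 + (Re (u$2))\<^sup>2 + (Im (u$2))\<^sup>2 = 1"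
    "(Re (w$1))\<^sup>2 + (Im (w$1))\<^sup>2 + (Re (w$2))\<^sup>2 + (Im (w$2))\<^sup>2 = 1"
    using assms norm_power2_vec2[of u] norm_power2_vec2[of w] by (simp_all add: cmod_power2)
  then show ?thesis
    by (simp add: bloch_def inner_vec_def sum_3 braket_2 cmod_power2) algebra
qed

lemma norm_bloch: assumes "norm u = 1" shows "norm (bloch u) = 1"
  using cmod_braket_power2_bloch[OF assms assms] assms
  by (simp add: braket_self norm_eq_sqrt_inner)

lemma inner_add_inner_le:
  fixes P Q S T :: "'a::real_inner"
  shows "S \<bullet> P + T \<bullet> Q \<le> (norm (S + T) * norm (P + Q) + norm (S - T) * norm (P - Q)) / 2"
proof -
  have "S \<bullet> P + T \<bullet> Q = ((S + T) \<bullet> (P + Q) + (S - T) \<bullet> (P - Q)) / 2"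
    by (simp add: inner_add_left inner_add_right inner_diff_left inner_diff_right)
  then show ?thesis
    using norm_cauchy_schwarz[of "S + T" "P + Q"] norm_cauchy_schwarz[of "S - T" "P - Q"] by simp
qed

lemma norm_add_diff_unit:
  fixes P Q :: "'a::real_inner"
  assumes "norm P = 1" "norm Q = 1"
  shows "norm (P + Q) = 2 * sqrt ((1 + P \<bullet> Q) / 2)" "norm (P - Q) = 2 * sqrt ((1 - P \<bullet> Q) / 2)"
proof -
  have "(norm (P + Q))\<^sup>2 = 4 * ((1 + P \<bullet> Q) / 2)" "(norm (P - Q))\<^sup>2 = 4 * ((1 - P \<bullet> Q) / 2)"
    using assms by (simp_all add: norm_eq_1 power2_norm_eq_inner inner_add_left inner_add_right
        inner_diff_left inner_diff_right inner_commute)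
  then show "norm (P + Q) = 2 * sqrt ((1 + P \<bullet> Q) / 2)" "norm (P - Q) = 2 * sqrt ((1 - P \<bullet> Q) / 2)"
    by (metis norm_ge_zero real_sqrt_abs real_sqrt_mult real_sqrt_four abs_of_nonneg)+
qed

lemma overlaps_le:
  assumes "norm x = 1" "norm y = 1" "norm e = 1" "norm f = 1"
  defines "a \<equiv> cmod (braket x y)" and "b \<equiv> cmod (braket e f)"
  shows "(cmod (braket e x))\<^sup>2 + (cmod (braket f y))\<^sup>2 \<le> 1 + a * b + sqrt ((1 - a\<^sup>2) * (1 - b\<^sup>2))"
proof -
  define P Q S T where "P = bloch x" and "Q = bloch y" and "S = bloch e" and "T = bloch f"
  have unit: "norm P = 1" "norm Q = 1" "norm S = 1" "norm T = 1"
    using assms norm_bloch unfolding P_def Q_def S_def T_def by auto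
  have "(1 + P \<bullet> Q) / 2 = a\<^sup>2" "(1 + S \<bullet> T) / 2 = b\<^sup>2"
    unfolding a_def b_def P_def Q_def S_def T_def using cmod_braket_power2_bloch assms by auto
  then have norms: "norm (P + Q) = 2 * a" "norm (P - Q) = 2 * sqrt (1 - a\<^sup>2)"
      "norm (S + T) = 2 * b" "norm (S - T) = 2 * sqrt (1 - b\<^sup>2)"
    using norm_add_diff_unit[OF unit(1,2)] norm_add_diff_unit[OF unit(3,4)]
    by (simp_all add: a_def b_def field_simps)
  have "S \<bullet> P + T \<bullet> Q \<le> 2 * (a * b) + 2 * (sqrt (1 - a\<^sup>2) * sqrt (1 - b\<^sup>2))"
    using inner_add_inner_le[of S P T Q] unfolding norms by (simp add: algebra_simps)
  moreover have "(cmod (braket e x))\<^sup>2 + (cmod (braket f y))\<^sup>2 = 1 + (S \<bullet> P + T \<bullet> Q) / 2"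
    unfolding P_def Q_def S_def T_def using cmod_braket_power2_bloch assms(1-4) by (simp add: field_simps)
  ultimately show ?thesis by (simp add: real_sqrt_mult)
qed

lemma overlap_sum_le_1:
  fixes a b :: real assumes "\<bar>a\<bar> \<le> 1" "\<bar>b\<bar> \<le> 1"
  shows "a * b + sqrt ((1 - a\<^sup>2) * (1 - b\<^sup>2)) \<le> 1"
proof -
  have "0 \<le> 1 - a\<^sup>2" "0 \<le> 1 - b\<^sup>2" using assms by (auto simp: abs_square_le_1)
  then have "sqrt ((1 - a\<^sup>2) * (1 - b\<^sup>2)) \<le> ((1 - a\<^sup>2) + (1 - b\<^sup>2)) / 2"
    by (rule arith_geo_mean_sqrt)
  moreover have "a * b \<le> (a\<^sup>2 + b\<^sup>2) / 2"
    using zero_le_power2[of "a - b"] by (simp add: power2_eq_square field_simps)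
  ultimately show ?thesis by simp
qed

lemma overlap_sum_eq_1_iff:
  fixes a b :: real assumes "\<bar>a\<bar> \<le> 1" "\<bar>b\<bar> \<le> 1"
  shows "a * b + sqrt ((1 - a\<^sup>2) * (1 - b\<^sup>2)) = 1 \<longleftrightarrow> a = b"
proof
  have nonneg: "0 \<le> 1 - a\<^sup>2" "0 \<le> 1 - b\<^sup>2" using assms by (auto simp: abs_square_le_1)
  {
    assume "a * b + sqrt ((1 - a\<^sup>2) * (1 - b\<^sup>2)) = 1"
    then have "(1 - a\<^sup>2) * (1 - b\<^sup>2) = (1 - a * b)\<^sup>2"
      using nonneg by (metis add_diff_cancel_left' mult_nonneg_nonneg real_sqrt_pow2)
    then have "(a - b)\<^sup>2 = 0" by (simp add: power2_eq_square algebra_simps)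
    then show "a = b" by simp
  }
  assume "a = b"
  then show "a * b + sqrt ((1 - a\<^sup>2) * (1 - b\<^sup>2)) = 1"
    using nonneg by (simp add: power2_eq_square[symmetric])
qed

definition real_unit_vec :: "real \<Rightarrow> qvec" where
  "real_unit_vec \<theta> = vector [of_real (cos \<theta>), of_real (sin \<theta>)]"

lemma braket_real_unit_vec: "braket (real_unit_vec \<theta>) (real_unit_vec \<theta>') = of_real (cos (\<theta> - \<theta>'))"
  by (simp add: real_unit_vec_def braket_2 cos_diff)

lemma overlaps_bound_attained:
  assumes "norm \<psi> = 1" "norm \<phi> = 1" "norm e = 1" "norm f = 1"
  defines "a \<equiv> cmod (braket \<psi> \<phi>)" and "b \<equiv> cmod (braket e f)"
  shows "\<exists>x y. norm x = 1 \<and> norm y = 1 \<and> braket x y = braket \<psi> \<phi> \<and>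
     (cmod (braket e x))\<^sup>2 + (cmod (braket f y))\<^sup>2 = 1 + a * b + sqrt ((1 - a\<^sup>2) * (1 - b\<^sup>2))"
proof -
  define A B where "A = arccos a" and "B = arccos b"
  define t s where "t = (B - A) / 2" and "s = (B + A) / 2"
  have angles: "t - s = - A" "B - s = t" "2 * t = B - A" by (simp_all add: t_def s_def field_simps)
  define \<omega> \<eta> where "\<omega> = cis (Arg (braket e f))" and "\<eta> = cis (Arg (braket \<psi> \<phi>))"
  have "\<bar>a\<bar> \<le> 1" "\<bar>b\<bar> \<le> 1" unfolding a_def b_def using cmod_braket_le_1 assms by auto
  then have AB: "cos A = a" "sin A = sqrt (1 - a\<^sup>2)" "cos B = b" "sin B = sqrt (1 - b\<^sup>2)"
    unfolding A_def B_def by (auto simp: sin_arccos)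
  have polar: "braket e f = of_real b * \<omega>" "braket \<psi> \<phi> = of_real a * \<eta>"
    unfolding \<omega>_def \<eta>_def a_def b_def by (rule polar_form)+
  have "cmod \<omega> = 1" "cmod \<eta> = 1" unfolding \<omega>_def \<eta>_def by simp_all
  note unimodular = this unimodular_mult_cnj[OF this(1)] unimodular_mult_cnj[OF this(2)]
  \<comment> \<open>a copy e0, f0 of the pair e, f with f0 real, and x0, y0 between them on the real circle\<close>
  define e0 f0 x0 y0 where "e0 = cnj \<omega> *s real_unit_vec 0" and "f0 = real_unit_vec B"
    and "x0 = real_unit_vec t" and "y0 = \<eta> *s real_unit_vec s"
  have unit: "norm e0 = 1" "norm f0 = 1" "norm x0 = 1" "norm y0 = 1"
    unfolding norm_eq_1_iff_braket e0_def f0_def x0_def y0_def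
    by (simp_all add: braket_scale_left braket_scale_right braket_real_unit_vec unimodular)
  have frame: "braket e0 f0 = braket e f" and pair: "braket x0 y0 = braket \<psi> \<phi>"
    unfolding e0_def f0_def x0_def y0_def polar
    by (simp_all add: braket_scale_left braket_scale_right braket_real_unit_vec AB angles mult.commute)
  have overlaps: "cmod (braket e0 x0) = \<bar>cos t\<bar>" "cmod (braket f0 y0) = \<bar>cos t\<bar>"
    unfolding e0_def f0_def x0_def y0_def
    by (simp_all add: braket_scale_left braket_scale_right braket_real_unit_vec unimodular norm_mult angles)
  obtain U where U: "unitary_op U" "U *v e0 = e" "U *v f0 = f"
    using unitary_maps_pair[OF unit(1,2) assms(3,4) frame[symmetric]] by blast
  have "2 * (cos t)\<^sup>2 = 1 + cos (B - A)"
    using cos_double_cos[of t] unfolding angles(3) by simp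
  also have "\<dots> = 1 + a * b + sqrt ((1 - a\<^sup>2) * (1 - b\<^sup>2))"
    by (simp add: cos_diff AB real_sqrt_mult mult.commute)
  finally have "(cmod (braket e (U *v x0)))\<^sup>2 + (cmod (braket f (U *v y0)))\<^sup>2
      = 1 + a * b + sqrt ((1 - a\<^sup>2) * (1 - b\<^sup>2))"
    using braket_unitary[OF U(1)] overlaps unfolding U(2,3)[symmetric] by simp
  moreover have "norm (U *v x0) = 1" "norm (U *v y0) = 1" "braket (U *v x0) (U *v y0) = braket \<psi> \<phi>"
    using unit pair by (simp_all add: norm_unitary braket_unitary U(1))
  ultimately show ?thesis by blast
qed

lemma success_random_unitary_le:
  assumes "\<Psi> \<in> random_unitary_channels"
    and "norm \<psi> = 1" "norm \<phi> = 1" "norm e = 1" "norm f = 1"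
  defines "a \<equiv> cmod (braket \<psi> \<phi>)" and "b \<equiv> cmod (braket e f)"
  shows "success \<Psi> \<psi> \<phi> e f \<le> (1 + a * b + sqrt ((1 - a\<^sup>2) * (1 - b\<^sup>2))) / 2"
    (is "_ \<le> ?v")
proof -
  obtain n :: nat and p :: "nat \<Rightarrow> real" and U :: "nat \<Rightarrow> qop"
    where p: "\<forall>x<n. 0 \<le> p x" "(\<Sum>x<n. p x) = 1" and U: "\<forall>x<n. unitary_op (U x)"
      and \<Psi>: "\<Psi> = (\<lambda>A. \<Sum>x<n. p x *\<^sub>R (U x ** A ** adjm (U x)))"
    using assms(1) unfolding random_unitary_channels_def by blast
  have "success (\<lambda>A. U x ** A ** adjm (U x)) \<psi> \<phi> e f \<le> ?v" if "x < n" for x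
    using overlaps_le[of "U x *v \<psi>" "U x *v \<phi>" e f] U that assms(2-5)
    by (simp add: success_unitary_conj norm_unitary braket_unitary a_def b_def)
  then have "success \<Psi> \<psi> \<phi> e f \<le> (\<Sum>x<n. p x * ?v)"
    unfolding \<Psi> success_mixture[OF finite_lessThan] using p(1) by (intro sum_mono mult_left_mono) auto
  also have "\<dots> = ?v" unfolding sum_distrib_right[symmetric] p(2) by simp
  finally show ?thesis .
qed

lemma success_random_unitary_attained:
  assumes "norm \<psi> = 1" "norm \<phi> = 1" "norm e = 1" "norm f = 1"
  defines "a \<equiv> cmod (braket \<psi> \<phi>)" and "b \<equiv> cmod (braket e f)"
  shows "\<exists>\<Psi>\<in>random_unitary_channels.
           success \<Psi> \<psi> \<phi> e f = (1 + a * b + sqrt ((1 - a\<^sup>2) * (1 - b\<^sup>2))) / 2"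
proof -
  obtain x y where xy: "norm x = 1" "norm y = 1" "braket x y = braket \<psi> \<phi>"
    and overlaps: "(cmod (braket e x))\<^sup>2 + (cmod (braket f y))\<^sup>2 = 1 + a * b + sqrt ((1 - a\<^sup>2) * (1 - b\<^sup>2))"
    using overlaps_bound_attained[OF assms(1-4)] unfolding a_def b_def by blast
  obtain U where U: "unitary_op U" "U *v \<psi> = x" "U *v \<phi> = y"
    using unitary_maps_pair[OF assms(1,2) xy] by blast
  show ?thesis
    using unitary_conj_random_unitary[OF U(1)] overlaps
    by (intro bexI[of _ "\<lambda>A. U ** A ** adjm U"]) (simp_all add: success_unitary_conj U)
qed

lemma jointly_convertible_random_unitary_iff:
  assumes "norm \<psi> = 1" "norm \<phi> = 1" "norm e = 1" "norm f = 1"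
  shows "jointly_convertible random_unitary_channels \<psi> \<phi> e f \<longleftrightarrow> cmod (braket \<psi> \<phi>) = cmod (braket e f)"
    (is "_ \<longleftrightarrow> ?a = ?b")
proof
  have bounds: "\<bar>?a\<bar> \<le> 1" "\<bar>?b\<bar> \<le> 1" using cmod_braket_le_1 assms by auto
  assume "jointly_convertible random_unitary_channels \<psi> \<phi> e f"
  then obtain \<Psi> where \<Psi>: "\<Psi> \<in> random_unitary_channels" "\<Psi> (ketbra \<psi>) = ketbra e" "\<Psi> (ketbra \<phi>) = ketbra f"
    unfolding jointly_convertible_def by blast
  have "success \<Psi> \<psi> \<phi> e f = 1"
    using assms(3,4) unfolding success_def \<Psi>(2,3) braket_ketbra by (simp add: braket_self)
  then have "1 \<le> ?a * ?b + sqrt ((1 - ?a\<^sup>2) * (1 - ?b\<^sup>2))"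
    using success_random_unitary_le[OF \<Psi>(1) assms] by simp
  then show "?a = ?b"
    using overlap_sum_le_1[OF bounds] overlap_sum_eq_1_iff[OF bounds] by linarith
next
  assume "?a = ?b"
  \<comment> \<open>the phase d turns f into a vector of the same state with overlap \<open><\<psi>|\<phi>>\<close> with e\<close>
  define d where "d = cis (Arg (braket \<psi> \<phi>)) * cnj (cis (Arg (braket e f)))"
  have "cmod d = 1" by (simp add: d_def norm_mult)
  then have "norm (d *s f) = 1"
    using assms(4) by (simp add: norm_eq_1_iff_braket braket_scale_left braket_scale_right unimodular_mult_cnj)
  moreover have "braket e (d *s f) = braket \<psi> \<phi>"
  proof -
    have "braket e (d *s f) = d * (of_real ?b * cis (Arg (braket e f)))"
      by (simp only: braket_scale_right polar_form[symmetric])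
    also have "\<dots> = of_real ?a * cis (Arg (braket \<psi> \<phi>)) * (cnj (cis (Arg (braket e f))) * cis (Arg (braket e f)))"
      using \<open>?a = ?b\<close> by (simp add: d_def mult_ac)
    also have "\<dots> = braket \<psi> \<phi>"
      by (simp only: unimodular_mult_cnj norm_cis mult_1_right polar_form[symmetric])
    finally show ?thesis .
  qed
  ultimately obtain U where U: "unitary_op U" "U *v \<psi> = e" "U *v \<phi> = d *s f"
    using unitary_maps_pair[OF assms(1-3)] by blast
  show "jointly_convertible random_unitary_channels \<psi> \<phi> e f"
    unfolding jointly_convertible_def using unitary_conj_random_unitary[OF U(1)] \<open>cmod d = 1\<close>
    by (intro bexI[of _ "\<lambda>A. U ** A ** adjm U"]) (simp_all add: unitary_conj_ketbra U ketbra_scale_unimodular)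
qed

theorem corollary2:
  fixes \<psi> \<phi> e f :: "complex ^ 2"
  assumes "norm \<psi> = 1" and "norm \<phi> = 1" and "norm e = 1" and "norm f = 1"
  defines "a \<equiv> cmod (braket \<psi> \<phi>)" and "b \<equiv> cmod (braket e f)"
  defines "v \<equiv> (1 + a * b + sqrt ((1 - a\<^sup>2) * (1 - b\<^sup>2))) / 2"
  shows "(\<forall>\<Psi>\<in>random_unitary_channels. success \<Psi> \<psi> \<phi> e f \<le> v)
       \<and> (\<exists>\<Psi>\<in>random_unitary_channels. success \<Psi> \<psi> \<phi> e f = v)
       \<and> (v = 1 \<longleftrightarrow> a = b)
       \<and> (jointly_convertible random_unitary_channels \<psi> \<phi> e f \<longleftrightarrow> a = b)"
proof -
  have "\<bar>a\<bar> \<le> 1" "\<bar>b\<bar> \<le> 1" unfolding a_def b_def using cmod_braket_le_1 assms by auto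
  then have "v = 1 \<longleftrightarrow> a = b" unfolding v_def using overlap_sum_eq_1_iff by simp
  then show ?thesis
    using success_random_unitary_le[OF _ assms(1-4)] success_random_unitary_attained[OF assms(1-4)]
      jointly_convertible_random_unitary_iff[OF assms(1-4)]
    unfolding v_def a_def b_def by blast
qed

end
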